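(* Assume the setting in the context. (a) Assume Conditions (MM), (SS), (JS-cts) and (JS-jump). Suppose that for every $f\in\mathcal{D}_{\mathcal{X}}$ there is at most one $u_+\in\mathcal{X}^{\mathcal{U}}$ with $(\widehat Lu_+)|_{\mathcal{U}}=0$, $\widetilde{\operatorname{Tr}}^{\mathcal{U}}_{\mathcal{X}}u_+=f$, and at most one $u_-\in\mathcal{X}^{\mathcal{V}}$ with $(\widehat Lu_-)|_{\mathcal{V}}=0$, $\widetilde{\operatorname{Tr}}^{\mathcal{V}}_{\mathcal{X}}u_-=f$. Then $\widetilde{\operatorname{Tr}}^{\mathcal{U}}_{\mathcal{X}}\widehat{\mathbf{S}}^L_{\mathcal{U}}:\mathcal{N}_{\mathcal{X}}\to\mathcal{D}_{\mathcal{X}}$ is one-to-one. If in addition there is $C_0$ such that every $u_+\in\mathcal{X}^{\mathcal{U}}$ with $(\widehat Lu_+)|_{\mathcal{U}}=0$ and every $u_-\in\mathcal{X}^{\mathcal{V}}$ with $(\widehat Lu_-)|_{\mathcal{V}}=0$ satisfy $\|u_+\|_{\mathcal{X}^{\mathcal{U}}}\le C_0\|\widetilde{\operatorname{Tr}}^{\mathcal{U}}_{\mathcal{X}}u_+\|_{\mathcal{D}_{\mathcal{X}}}$ and $\|u_-\|_{\mathcal{X}^{\mathcal{V}}}\le C_0\|\widetilde{\operatorname{Tr}}^{\mathcal{V}}_{\mathcal{X}}u_-\|_{\mathcal{D}_{\mathcal{X}}}$, then there is $C_1$ with $\|g\|_{\mathcal{N}_{\mathcal{X}}}\le C_1\|\widetilde{\operatorname{Tr}}^{\mathcal{U}}_{\mathcal{X}}\widehat{\mathbf{S}}^L_{\mathcal{U}}g\|_{\mathcal{D}_{\mathcal{X}}}$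 for all $g\in\mathcal{N}_{\mathcal{X}}$. (b) Assume Conditions (TT), (DD), (JD-cts) and (JD-jump). Suppose that for every $g\in\mathcal{N}_{\mathcal{X}}$ there is at most one $u_+\in\mathcal{X}^{\mathcal{U}}$ with $(\widehat Lu_+)|_{\mathcal{U}}=0$, $\widehat{\mathbf{M}}^{\mathcal{U}}_Bu_+=g$, and at most one $u_-\in\mathcal{X}^{\mathcal{V}}$ with $(\widehat Lu_-)|_{\mathcal{V}}=0$, $\widehat{\mathbf{M}}^{\mathcal{V}}_Bu_-=g$. Then $\widehat{\mathbf{M}}^{\mathcal{U}}_B\widehat{\mathbf{D}}^B_{\mathcal{U}}:\mathcal{D}_{\mathcal{X}}\to\mathcal{N}_{\mathcal{X}}$ is one-to-one. If in addition there is $C_0$ such that every $u_+\in\mathcal{X}^{\mathcal{U}}$ with $(\widehat Lu_+)|_{\mathcal{U}}=0$ and every $u_-\in\mathcal{X}^{\mathcal{V}}$ with $(\widehat Lu_-)|_{\mathcal{V}}=0$ satisfy $\|u_+\|_{\mathcal{X}^{\mathcal{U}}}\le C_0\|\widehat{\mathbf{M}}^{\mathcal{U}}_Bu_+\|_{\mathcal{N}_{\mathcal{X}}}$ and $\|u_-\|_{\mathcal{X}^{\mathcal{V}}}\le C_0\|\widehat{\mathbf{M}}^{\mathcal{V}}_Bu_-\|_{\mathcal{N}_{\mathcal{X}}}$, then there is $C_1$ with $\|f\|_{\mathcal{D}_{\mathcal{X}}}\le C_1\|\widehat{\mathbf{M}}^{\mathcal{U}}_B\widehat{\mathbf{D}}^B_{\mathcal{U}}f\|_{\mathcal{N}_{\mathcal{X}}}$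 for all $f\in\mathcal{D}_{\mathcal{X}}$.
   Context: Let $\mathcal{X}^{\mathcal{U}}$, $\mathcal{X}^{\mathcal{V}}$, $\mathcal{D}_{\mathcal{X}}$, $\mathcal{N}_{\mathcal{X}}$ be quasi-Banach spaces. For $\mathcal{O}\in\{\mathcal{U},\mathcal{V}\}$: let $u\mapsto(\widehat Lu)|_{\mathcal{O}}$ be a linear operator on $\mathcal{X}^{\mathcal{O}}$, let $\mathcal{K}^{\mathcal{O}}=\{u\in\mathcal{X}^{\mathcal{O}}:(\widehat Lu)|_{\mathcal{O}}=0\}$, and let $\widetilde{\operatorname{Tr}}^{\mathcal{O}}_{\mathcal{X}}:\mathcal{K}^{\mathcal{O}}\to\mathcal{D}_{\mathcal{X}}$, $\widehat{\mathbf{M}}^{\mathcal{O}}_B:\mathcal{K}^{\mathcal{O}}\to\mathcal{N}_{\mathcal{X}}$, $\widehat{\mathbf{D}}^B_{\mathcal{O}}:\mathcal{D}_{\mathcal{X}}\to\mathcal{X}^{\mathcal{O}}$, $\widehat{\mathbf{S}}^L_{\mathcal{O}}:\mathcal{N}_{\mathcal{X}}\to\mathcal{X}^{\mathcal{O}}$ be linear operators. For $\mathcal{O}\in\{\mathcal U,\mathcal V\}$ consider: (T)$_{\mathcal{O}}$ $\widetilde{\operatorname{Tr}}^{\mathcal{O}}_{\mathcal{X}}$ is bounded $\mathcal{K}^{\mathcal{O}}\to\mathcal{D}_{\mathcal{X}}$; (M)$_{\mathcal{O}}$ $\widehat{\mathbf{M}}^{\mathcal{O}}_B$ is bounded $\mathcal{K}^{\mathcal{O}}\to\mathcal{N}_{\mathcal{X}}$;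 (S)$_{\mathcal{O}}$ $\widehat{\mathbf{S}}^L_{\mathcal{O}}$ is bounded $\mathcal{N}_{\mathcal{X}}\to\mathcal{X}^{\mathcal{O}}$ with range in $\mathcal{K}^{\mathcal{O}}$; (D)$_{\mathcal{O}}$ $\widehat{\mathbf{D}}^B_{\mathcal{O}}$ is bounded $\mathcal{D}_{\mathcal{X}}\to\mathcal{X}^{\mathcal{O}}$ with range in $\mathcal{K}^{\mathcal{O}}$; (G)$_{\mathcal{O}}$ every $u\in\mathcal{K}^{\mathcal{O}}$ satisfies $u=-\widehat{\mathbf{D}}^B_{\mathcal{O}}(\widetilde{\operatorname{Tr}}^{\mathcal{O}}_{\mathcal{X}}u)+\widehat{\mathbf{S}}^L_{\mathcal{O}}(\widehat{\mathbf{M}}^{\mathcal{O}}_Bu)$. Condition (TT) means (T)$_{\mathcal U}$ and (T)$_{\mathcal V}$ both hold; likewise (MM), (SS), (DD), (GG). Further conditions (each including that the potentials involved lie in the respective $\mathcal K^{\mathcal O}$, so the expressions are defined): (JS-cts) $\widetilde{\operatorname{Tr}}^{\mathcal{U}}_{\mathcal{X}}(\widehat{\mathbf{S}}^L_{\mathcal{U}}g)-\widetilde{\operatorname{Tr}}^{\mathcal{V}}_{\mathcal{X}}(\widehat{\mathbf{S}}^L_{\mathcal{V}}g)=0$ for all $g\in\mathcal{N}_{\mathcal{X}}$; (JD-cts) $\widehat{\mathbf{M}}^{\mathcal{U}}_B(\widehat{\mathbf{D}}^B_{\mathcal{U}}f)-\widehat{\mathbf{M}}^{\mathcal{V}}_B(\widehat{\mathbf{D}}^B_{\mathcal{V}}f)=0$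 for all $f\in\mathcal{D}_{\mathcal{X}}$; (JS-jump) $\widehat{\mathbf{M}}^{\mathcal{U}}_B(\widehat{\mathbf{S}}^L_{\mathcal{U}}g)+\widehat{\mathbf{M}}^{\mathcal{V}}_B(\widehat{\mathbf{S}}^L_{\mathcal{V}}g)=g$ for all $g\in\mathcal{N}_{\mathcal{X}}$; (JD-jump) $\widetilde{\operatorname{Tr}}^{\mathcal{U}}_{\mathcal{X}}(\widehat{\mathbf{D}}^B_{\mathcal{U}}f)+\widetilde{\operatorname{Tr}}^{\mathcal{V}}_{\mathcal{X}}(\widehat{\mathbf{D}}^B_{\mathcal{V}}f)=-f$ for all $f\in\mathcal{D}_{\mathcal{X}}$. *)

theory Defs
  imports Complex_Main
begin

definition quasi_norm :: "('a::real_vector \<Rightarrow> real) \<Rightarrow> bool" where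
  "quasi_norm N \<longleftrightarrow>
     (\<forall>x. 0 \<le> N x) \<and> (\<forall>x. N x = 0 \<longleftrightarrow> x = 0) \<and>
     (\<forall>c x. N (c *\<^sub>R x) = \<bar>c\<bar> * N x) \<and>
     (\<exists>K\<ge>1. \<forall>x y. N (x + y) \<le> K * (N x + N y))"

definition quasi_banach :: "('a::real_vector \<Rightarrow> real) \<Rightarrow> bool" where
  "quasi_banach N \<longleftrightarrow> quasi_norm N \<and>
     (\<forall>s::nat \<Rightarrow> 'a. (\<forall>e>0. \<exists>M. \<forall>m\<ge>M. \<forall>n\<ge>M. N (s m - s n) < e)
        \<longrightarrow> (\<exists>l. (\<lambda>n. N (s n - l)) \<longlonglongrightarrow> 0))"

definition linear_on_set :: "'a::real_vector set \<Rightarrow> ('a \<Rightarrow> 'b::real_vector) \<Rightarrow> bool" where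
  "linear_on_set A f \<longleftrightarrow>
     (\<forall>x\<in>A. \<forall>y\<in>A. f (x + y) = f x + f y) \<and> (\<forall>c. \<forall>x\<in>A. f (c *\<^sub>R x) = c *\<^sub>R f x)"

definition bounded_op :: "'a set \<Rightarrow> ('a \<Rightarrow> real) \<Rightarrow> ('b \<Rightarrow> real) \<Rightarrow> ('a \<Rightarrow> 'b) \<Rightarrow> bool" where
  "bounded_op A NA NB T \<longleftrightarrow> (\<exists>C. \<forall>x\<in>A. NB (T x) \<le> C * NA x)"

end

theory Submission
  imports Defs
begin

text \<open>Write \<open>R\<^sub>U, R\<^sub>V\<close> for the one-sided potentials, \<open>P\<close> for the boundary operator that is
  continuous across the interface and \<open>Q\<close> for the one that jumps by \<open>c g\<close>. If \<open>P\<^sub>U (R\<^sub>U g) = 0\<close>,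
  continuity gives \<open>P\<^sub>V (R\<^sub>V g) = 0\<close>, uniqueness on both sides forces \<open>R\<^sub>U g = R\<^sub>V g = 0\<close>, and
  the jump relation gives \<open>g = 0\<close>. Quantitatively, the jump relation and the quasi-triangle
  inequality bound \<open>g\<close> by \<open>Q\<^sub>U (R\<^sub>U g)\<close> and \<open>Q\<^sub>V (R\<^sub>V g)\<close>, which the a priori estimates control by
  the common boundary value \<open>P\<^sub>U (R\<^sub>U g)\<close>. Part (a) is this with \<open>(P, Q, R, c) = (Tr, M, S, 1)\<close>,
  part (b) with \<open>(P, Q, R, c) = (M, Tr, D, -1)\<close>.\<close>

lemma quasi_norm_nonneg: "quasi_norm N \<Longrightarrow> 0 \<le> N x"
  unfolding quasi_norm_def by blast

lemma bounded_op_dominated_norm: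
  assumes "bounded_op A NB NC T" "\<forall>x\<in>A. NB x \<le> C * NA x"
    and "\<forall>x. 0 \<le> NB x" "\<forall>x. 0 \<le> NA x"
  shows "bounded_op A NA NC T"
proof -
  obtain a where a: "\<forall>x\<in>A. NC (T x) \<le> a * NB x"
    using assms(1) unfolding bounded_op_def by blast
  have "NC (T x) \<le> (max a 0 * max C 0) * NA x" if "x \<in> A" for x
  proof -
    have "NC (T x) \<le> max a 0 * NB x"
      using a that assms(3) by (meson max.cobounded1 mult_right_mono order_trans)
    also have "\<dots> \<le> max a 0 * (max C 0 * NA x)"
      using assms(2,4) that by (meson max.cobounded1 mult_left_mono mult_right_mono
          max.cobounded2 order_trans)
    finally show ?thesis by (simp add: mult.assoc)
  qed
  then show ?thesis unfolding bounded_op_def by blast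
qed

lemma inj_boundary_value_of_potential:
  fixes RU :: "'g::real_vector \<Rightarrow> 'xu"
  assumes uniq: "inj_on PU KU" "inj_on PV KV" and RUV: "range RU \<subseteq> KU" "range RV \<subseteq> KV"
    and cont: "\<forall>g. PU (RU g) = PV (RV g)"
    and jump: "\<forall>g. QU (RU g) + QV (RV g) = c *\<^sub>R g" and "c \<noteq> 0"
  shows "inj (\<lambda>g. PU (RU g))"
proof (rule injI)
  fix g h assume eq: "PU (RU g) = PU (RU h)"
  have RU: "RU g = RU h"
    using inj_onD[OF uniq(1) eq] RUV(1) by blast
  have "PV (RV g) = PV (RV h)"
    using eq cont by simp
  then have RV: "RV g = RV h"
    using inj_onD[OF uniq(2)] RUV(2) by blast
  have "c *\<^sub>R g = QU (RU g) + QV (RV g)"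
    using jump by simp
  also have "\<dots> = c *\<^sub>R h"
    using jump by (simp add: RU RV)
  finally show "g = h"
    using \<open>c \<noteq> 0\<close> by (simp add: scaleR_cancel_left)
qed

lemma norm_le_boundary_value_of_potential:
  fixes nG :: "'g::real_vector \<Rightarrow> real"
  assumes "quasi_norm nG"
    and QU: "bounded_op KU (\<lambda>u. nB (PU u)) nG QU" and QV: "bounded_op KV (\<lambda>v. nB (PV v)) nG QV"
    and RUV: "range RU \<subseteq> KU" "range RV \<subseteq> KV"
    and cont: "\<forall>g. PU (RU g) = PV (RV g)"
    and jump: "\<forall>g. QU (RU g) + QV (RV g) = c *\<^sub>R g" and "c \<noteq> 0"
  shows "\<exists>C1. \<forall>g. nG g \<le> C1 * nB (PU (RU g))"
proof -
  obtain a where a: "\<forall>u\<in>KU. nG (QU u) \<le> a * nB (PU u)"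
    using QU unfolding bounded_op_def by blast
  obtain b where b: "\<forall>v\<in>KV. nG (QV v) \<le> b * nB (PV v)"
    using QV unfolding bounded_op_def by blast
  obtain K where K: "K \<ge> 1" "\<forall>x y. nG (x + y) \<le> K * (nG x + nG y)"
    using \<open>quasi_norm nG\<close> unfolding quasi_norm_def by blast
  have hom: "\<forall>t x. nG (t *\<^sub>R x) = \<bar>t\<bar> * nG x"
    using \<open>quasi_norm nG\<close> unfolding quasi_norm_def by blast
  have "nG g \<le> (\<bar>inverse c\<bar> * K * (a + b)) * nB (PU (RU g))" for g
  proof -
    have "nG g = \<bar>inverse c\<bar> * nG (QU (RU g) + QV (RV g))"
      using jump hom \<open>c \<noteq> 0\<close> by (metis scaleR_scaleR left_inverse scaleR_one)
    also have "\<dots> \<le> \<bar>inverse c\<bar> * (K * (nG (QU (RU g)) + nG (QV (RV g))))"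
      using K(2) by (simp add: mult_left_mono)
    also have "\<dots> \<le> \<bar>inverse c\<bar> * (K * (a * nB (PU (RU g)) + b * nB (PU (RU g))))"
    proof -
      have "nG (QU (RU g)) \<le> a * nB (PU (RU g))" using a RUV(1) by blast
      moreover have "nG (QV (RV g)) \<le> b * nB (PU (RU g))" using b RUV(2) cont by auto
      ultimately show ?thesis using K(1) by (intro mult_left_mono add_mono) auto
    qed
    finally show ?thesis by (simp add: algebra_simps)
  qed
  then show ?thesis by blast
qed

lemma transmission_inversion:
  fixes nG :: "'g::real_vector \<Rightarrow> real"
  assumes nX: "quasi_norm nXU" "quasi_norm nXV" and nB: "quasi_norm nB" and nG: "quasi_norm nG"
    and QU: "bounded_op KU nXU nG QU" and QV: "bounded_op KV nXV nG QV"
    and RUV: "range RU \<subseteq> KU" "range RV \<subseteq> KV"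
    and cont: "\<forall>g. PU (RU g) = PV (RV g)"
    and jump: "\<forall>g. QU (RU g) + QV (RV g) = c *\<^sub>R g" "c \<noteq> 0"
    and uniq: "inj_on PU KU" "inj_on PV KV"
  shows "inj (\<lambda>g. PU (RU g))
    \<and> ((\<exists>C0. (\<forall>u\<in>KU. nXU u \<le> C0 * nB (PU u)) \<and> (\<forall>v\<in>KV. nXV v \<le> C0 * nB (PV v)))
        \<longrightarrow> (\<exists>C1. \<forall>g. nG g \<le> C1 * nB (PU (RU g))))"
proof (intro conjI impI)
  show "inj (\<lambda>g. PU (RU g))"
    by (rule inj_boundary_value_of_potential[OF uniq RUV cont jump])
next
  assume "\<exists>C0. (\<forall>u\<in>KU. nXU u \<le> C0 * nB (PU u)) \<and> (\<forall>v\<in>KV. nXV v \<le> C0 * nB (PV v))"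
  then obtain C0 where C0: "\<forall>u\<in>KU. nXU u \<le> C0 * nB (PU u)" "\<forall>v\<in>KV. nXV v \<le> C0 * nB (PV v)"
    by blast
  have "bounded_op KU (\<lambda>u. nB (PU u)) nG QU"
    using QU C0(1) by (rule bounded_op_dominated_norm) (simp_all add: nX nB quasi_norm_nonneg)
  moreover have "bounded_op KV (\<lambda>v. nB (PV v)) nG QV"
    using QV C0(2) by (rule bounded_op_dominated_norm) (simp_all add: nX nB quasi_norm_nonneg)
  ultimately show "\<exists>C1. \<forall>g. nG g \<le> C1 * nB (PU (RU g))"
    by (rule norm_le_boundary_value_of_potential[OF nG _ _ RUV cont jump])
qed

theorem theorem6p3:
  fixes nXU :: "'xu::real_vector \<Rightarrow> real" and nXV :: "'xv::real_vector \<Rightarrow> real"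
    and nD :: "'d::real_vector \<Rightarrow> real" and nN :: "'n::real_vector \<Rightarrow> real"
    and LU :: "'xu \<Rightarrow> 'yu::real_vector" and LV :: "'xv \<Rightarrow> 'yv::real_vector"
    and TrU :: "'xu \<Rightarrow> 'd" and TrV :: "'xv \<Rightarrow> 'd"
    and MU :: "'xu \<Rightarrow> 'n" and MV :: "'xv \<Rightarrow> 'n"
    and DU :: "'d \<Rightarrow> 'xu" and DV :: "'d \<Rightarrow> 'xv"
    and SU :: "'n \<Rightarrow> 'xu" and SV :: "'n \<Rightarrow> 'xv"
    and KU :: "'xu set" and KV :: "'xv set"
  assumes qb: "quasi_banach nXU" "quasi_banach nXV" "quasi_banach nD" "quasi_banach nN"
    and linL: "linear LU" "linear LV"
    and KU_def: "KU = {u. LU u = 0}" and KV_def: "KV = {u. LV u = 0}"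
    and linTr: "linear_on_set KU TrU" "linear_on_set KV TrV"
    and linM: "linear_on_set KU MU" "linear_on_set KV MV"
    and linD: "linear DU" "linear DV"
    and linS: "linear SU" "linear SV"
  shows
   "(  \<comment> \<open>(a)\<close>
      ( \<comment> \<open>(MM)\<close> bounded_op KU nXU nN MU \<and> bounded_op KV nXV nN MV
      \<and> \<comment> \<open>(SS)\<close> bounded_op UNIV nN nXU SU \<and> range SU \<subseteq> KU
                  \<and> bounded_op UNIV nN nXV SV \<and> range SV \<subseteq> KV
      \<and> \<comment> \<open>(JS-cts)\<close> (\<forall>g. TrU (SU g) - TrV (SV g) = 0)
      \<and> \<comment> \<open>(JS-jump)\<close> (\<forall>g. MU (SU g) + MV (SV g) = g)
      \<and> (\<forall>f u v. u \<in> KU \<and> TrU u = f \<and> v \<in> KU \<and> TrU v = f \<longrightarrow> u = v)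
      \<and> (\<forall>f u v. u \<in> KV \<and> TrV u = f \<and> v \<in> KV \<and> TrV v = f \<longrightarrow> u = v))
      \<longrightarrow>
      (inj (\<lambda>g. TrU (SU g))
       \<and> ((\<exists>C0. (\<forall>u\<in>KU. nXU u \<le> C0 * nD (TrU u)) \<and> (\<forall>u\<in>KV. nXV u \<le> C0 * nD (TrV u)))
          \<longrightarrow> (\<exists>C1. \<forall>g. nN g \<le> C1 * nD (TrU (SU g))))))
    \<and>
    (  \<comment> \<open>(b)\<close>
      ( \<comment> \<open>(TT)\<close> bounded_op KU nXU nD TrU \<and> bounded_op KV nXV nD TrV
      \<and> \<comment> \<open>(DD)\<close> bounded_op UNIV nD nXU DU \<and> range DU \<subseteq> KU
                  \<and> bounded_op UNIV nD nXV DV \<and> range DV \<subseteq> KV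
      \<and> \<comment> \<open>(JD-cts)\<close> (\<forall>f. MU (DU f) - MV (DV f) = 0)
      \<and> \<comment> \<open>(JD-jump)\<close> (\<forall>f. TrU (DU f) + TrV (DV f) = - f)
      \<and> (\<forall>g u v. u \<in> KU \<and> MU u = g \<and> v \<in> KU \<and> MU v = g \<longrightarrow> u = v)
      \<and> (\<forall>g u v. u \<in> KV \<and> MV u = g \<and> v \<in> KV \<and> MV v = g \<longrightarrow> u = v))
      \<longrightarrow>
      (inj (\<lambda>f. MU (DU f))
       \<and> ((\<exists>C0. (\<forall>u\<in>KU. nXU u \<le> C0 * nN (MU u)) \<and> (\<forall>u\<in>KV. nXV u \<le> C0 * nN (MV u)))
          \<longrightarrow> (\<exists>C1. \<forall>f. nD f \<le> C1 * nN (MU (DU f))))))"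
proof -
  have qn: "quasi_norm nXU" "quasi_norm nXV" "quasi_norm nD" "quasi_norm nN"
    using qb unfolding quasi_banach_def by blast+
  show ?thesis
  proof ((rule conjI; rule impI), goal_cases)
    case 1
    then have "inj_on TrU KU" "inj_on TrV KV"
      unfolding inj_on_def by blast+
    with 1 show ?case
      by (intro transmission_inversion[OF qn(1,2,3,4), where PU = TrU and PV = TrV
          and QU = MU and QV = MV and RU = SU and RV = SV and c = 1]) simp_all
  next
    case 2
    then have "inj_on MU KU" "inj_on MV KV"
      unfolding inj_on_def by blast+
    with 2 show ?case
      by (intro transmission_inversion[OF qn(1,2,4,3), where PU = MU and PV = MV
          and QU = TrU and QV = TrV and RU = DU and RV = DV and c = "-1"]) simp_all
  qed
qed

end
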